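(* Let $\omega$ be a radial weight and $0<p<\infty$ with $p\neq2$. Then $\mathrm{HL}^\omega_p\neq A^p_\omega$; more precisely, there is no constant $C>1$ such that $C^{-1}\|f\|_{\mathrm{HL}^\omega_p}\le\|f\|_{A^p_\omega}\le C\|f\|_{\mathrm{HL}^\omega_p}$ for all $f\in\mathcal H(\mathbb D)$.
   Context: $\mathbb{D}$ is the open unit disc, $\mathcal{H}(\mathbb{D})$ the analytic functions on it, $dA(z)=\frac{dx\,dy}{\pi}$. A radial weight is a non-negative $\omega\in L^1([0,1))$ extended by $\omega(z)=\omega(|z|)$, with $\int_r^1\omega(s)\,ds>0$ for all $0\le r<1$. Moments: $\omega_x=\int_0^1 r^x\omega(r)\,dr$. $\|f\|^p_{A^p_\omega}=\int_{\mathbb D}|f|^p\omega\,dA$. $\|f\|^p_{\mathrm{HL}^\omega_p}=\sum_{n=0}^\infty|\widehat f(n)|^p(n+1)^{p-2}\omega_{np+1}$ for $f(z)=\sum\widehat f(n)z^n$. *)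

theory Defs
  imports "HOL-Complex_Analysis.Complex_Analysis"
begin

text \<open>Radial weight: non-negative, integrable on [0,1), with positive tail integrals.
  It is extended to the disc by omega(z) = omega(|z|).\<close>
definition radial_weight :: "(real \<Rightarrow> real) \<Rightarrow> bool" where
  "radial_weight \<omega> \<longleftrightarrow>
     (\<forall>r\<in>{0..<1}. 0 \<le> \<omega> r) \<and>
     set_integrable lborel {0..<1::real} \<omega> \<and>
     (\<forall>r\<in>{0..<1::real}. (LINT s:{r..<1}|lborel. \<omega> s) > 0)"

definition moment :: "(real \<Rightarrow> real) \<Rightarrow> real \<Rightarrow> real" where
  "moment \<omega> x = (LINT r:{0..<1}|lborel. r powr x * \<omega> r)"

definition taylor_coeff :: "(complex \<Rightarrow> complex) \<Rightarrow> nat \<Rightarrow> complex" where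
  "taylor_coeff f n = (deriv ^^ n) f 0 / of_nat (fact n)"

definition ennroot :: "real \<Rightarrow> ennreal \<Rightarrow> ennreal" where
  "ennroot p x = (if x = \<infinity> then \<infinity> else ennreal (enn2real x powr (1 / p)))"

text \<open>Bergman norm: (integral over the disc of |f|^p omega dA)^(1/p), dA = dx dy / pi.\<close>
definition A_norm :: "(real \<Rightarrow> real) \<Rightarrow> real \<Rightarrow> (complex \<Rightarrow> complex) \<Rightarrow> ennreal" where
  "A_norm \<omega> p f = ennroot p
     ((\<integral>\<^sup>+ z. indicator (ball 0 1) z * ennreal (norm (f z) powr p * \<omega> (norm z)) \<partial>lborel)
        / ennreal pi)"

definition HL_norm :: "(real \<Rightarrow> real) \<Rightarrow> real \<Rightarrow> (complex \<Rightarrow> complex) \<Rightarrow> ennreal" where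
  "HL_norm \<omega> p f = ennroot p
     (\<Sum>n. ennreal (norm (taylor_coeff f n) powr p * (real n + 1) powr (p - 2)
                     * moment \<omega> (real n * p + 1)))"

end

theory Submission
  imports Defs "HOL-Real_Asymp.Real_Asymp"
begin

text \<open>Both norms are computed exactly on the monomials z^n. Integrating in polar coordinates
  gives ||z^n||_A^p = 2 omega_(np+1), while the HL norm sees a single Taylor coefficient, so
  ||z^n||_HL^p = (n+1)^(p-2) omega_(np+1). The moments are positive, so a two-sided norm
  equivalence would keep (n+1)^(p-2) between two positive constants, which fails for p \<noteq> 2.\<close>

lemma emeasure_ball_minus_cball_complex:
  fixes a R :: real
  assumes "0 \<le> a" "a < R"
  shows "emeasure lborel (ball (0::complex) R - cball 0 a) = ennreal (pi * R\<^sup>2 - pi * a\<^sup>2)"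
proof -
  have "emeasure lborel (ball (0::complex) R - cball 0 a)
      = ennreal (pi * R\<^sup>2) - ennreal (pi * a\<^sup>2)"
    using assms by (subst emeasure_Diff)
      (auto simp: emeasure_ball emeasure_cball unit_ball_vol_2 mult.commute cball_subset_ball_iff)
  also have "\<dots> = ennreal (pi * R\<^sup>2 - pi * a\<^sup>2)"
    using assms by (subst ennreal_minus) (auto intro!: mult_left_mono power_mono)
  finally show ?thesis .
qed

lemma nn_integral_circumference:
  fixes a b :: real
  assumes "0 \<le> a" "a \<le> b"
  shows "(\<integral>\<^sup>+r. ennreal (2 * pi * r) * indicator {a..b} r \<partial>lborel) = ennreal (pi * b\<^sup>2 - pi * a\<^sup>2)"
  using assms
  by (subst nn_integral_FTC_Icc[where F = "\<lambda>r. pi * r\<^sup>2"])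
     (auto intro!: derivative_eq_intros)

lemma distr_norm_ball_complex:
  assumes "0 \<le> R"
  shows "distr (density lborel (indicator (ball (0::complex) R))) borel norm
       = density lborel (\<lambda>r. ennreal (2 * pi * r) * indicator {0..R} r)"
proof (rule measure_eqI_lessThan)
  fix x :: real
  have "norm -` {x<..} = {z::complex. x < norm z}" by auto
  moreover have "{z::complex. x < norm z} \<in> sets borel"
    by (simp add: borel_open open_Collect_less continuous_intros)
  ultimately have lhs: "emeasure (distr (density lborel (indicator (ball (0::complex) R))) borel norm) {x<..}
      = emeasure lborel (ball 0 R \<inter> {z::complex. x < norm z})"
    by (simp add: emeasure_distr emeasure_restricted)
  have rhs: "emeasure (density lborel (\<lambda>r. ennreal (2 * pi * r) * indicator {0..R} r)) {x<..}
      = (\<integral>\<^sup>+r. ennreal (2 * pi * r) * indicator ({0..R} \<inter> {x<..}) r \<partial>lborel)"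
    by (subst emeasure_density) (auto intro!: nn_integral_cong split: split_indicator)
  consider "x < 0" | "0 \<le> x" "x < R" | "R \<le> x" by linarith
  then have "emeasure lborel (ball 0 R \<inter> {z::complex. x < norm z})
      = (\<integral>\<^sup>+r. ennreal (2 * pi * r) * indicator ({0..R} \<inter> {x<..}) r \<partial>lborel)"
  proof cases
    case 1
    then have "ball 0 R \<inter> {z::complex. x < norm z} = ball 0 R" "{0..R} \<inter> {x<..} = {0..R}"
      by (auto simp: order.strict_trans2)
    then show ?thesis
      using nn_integral_circumference[of 0 R] assms
      by (simp add: emeasure_ball unit_ball_vol_2 mult.commute)
  next
    case 2
    then have "ball 0 R \<inter> {z::complex. x < norm z} = ball 0 R - cball 0 x" by auto
    moreover have "(\<integral>\<^sup>+r. ennreal (2 * pi * r) * indicator ({0..R} \<inter> {x<..}) r \<partial>lborel)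
        = (\<integral>\<^sup>+r. ennreal (2 * pi * r) * indicator {x..R} r \<partial>lborel)"
      using AE_lborel_singleton[of x] 2
      by (intro nn_integral_cong_AE) (auto elim!: eventually_mono split: split_indicator)
    ultimately show ?thesis
      using 2 by (simp add: emeasure_ball_minus_cball_complex nn_integral_circumference)
  next
    case 3
    then have "ball 0 R \<inter> {z::complex. x < norm z} = {}" "{0..R} \<inter> {x<..} = {}" by auto
    then show ?thesis by simp
  qed
  with lhs rhs show "emeasure (distr (density lborel (indicator (ball (0::complex) R))) borel norm) {x<..}
      = emeasure (density lborel (\<lambda>r. ennreal (2 * pi * r) * indicator {0..R} r)) {x<..}"
    by simp
  have "emeasure lborel (ball 0 R \<inter> {z::complex. x < norm z}) \<le> emeasure lborel (ball (0::complex) R)"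
    by (rule emeasure_mono) auto
  also have "\<dots> < \<infinity>" using assms by (simp add: emeasure_ball)
  finally show "emeasure (distr (density lborel (indicator (ball (0::complex) R))) borel norm) {x<..} < \<infinity>"
    using lhs by simp
qed simp_all

lemma nn_integral_radial_ball_complex:
  fixes g :: "real \<Rightarrow> ennreal"
  assumes "0 \<le> R" and [measurable]: "g \<in> borel_measurable borel"
  shows "(\<integral>\<^sup>+z. indicator (ball (0::complex) R) z * g (norm z) \<partial>lborel)
       = (\<integral>\<^sup>+r. ennreal (2 * pi * r) * indicator {0..R} r * g r \<partial>lborel)"
proof -
  have "(\<integral>\<^sup>+z. indicator (ball (0::complex) R) z * g (norm z) \<partial>lborel)
      = (\<integral>\<^sup>+z. g (norm z) \<partial>density lborel (indicator (ball (0::complex) R)))"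
    by (subst nn_integral_density) (auto intro: borel_measurable_indicator)
  also have "\<dots> = (\<integral>\<^sup>+r. g r \<partial>distr (density lborel (indicator (ball (0::complex) R))) borel norm)"
    by (subst nn_integral_distr) auto
  also have "\<dots> = (\<integral>\<^sup>+r. ennreal (2 * pi * r) * indicator {0..R} r * g r \<partial>lborel)"
    by (simp add: distr_norm_ball_complex[OF assms(1)] nn_integral_density)
  finally show ?thesis .
qed

lemma taylor_coeff_power: "taylor_coeff (\<lambda>z. z ^ m) k = (if k = m then 1 else 0)"
proof -
  have "(deriv ^^ k) (\<lambda>z::complex. z ^ m) 0 = pochhammer (of_nat (Suc m - k)) k * 0 ^ (m - k)"
    using higher_deriv_power[of k 0 m 0] by simp
  also have "\<dots> = (if k = m then fact m else 0)"
    by (cases k m rule: linorder_cases) (auto simp: pochhammer_fact pochhammer_0_left)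
  finally show ?thesis
    unfolding taylor_coeff_def by simp
qed

lemma radial_weight_borel_measurable [measurable]:
  assumes "radial_weight \<omega>"
  shows "(\<lambda>r. indicator {0..<1} r * \<omega> r) \<in> borel_measurable borel"
  using assms borel_measurable_integrable
  unfolding radial_weight_def set_integrable_def by auto

lemma radial_weight_set_integrable_moment:
  assumes "radial_weight \<omega>" "0 \<le> x"
  shows "set_integrable lborel {0..<1} (\<lambda>r. r powr x * \<omega> r)"
proof (rule set_integrable_bound)
  show \<omega>: "set_integrable lborel {0..<1} \<omega>"
    using assms(1) unfolding radial_weight_def by simp
  show "set_borel_measurable lborel {0..<1} (\<lambda>r. r powr x * \<omega> r)"
    using radial_weight_borel_measurable[OF assms(1)]
    unfolding set_borel_measurable_def by (simp add: mult.left_commute)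
  show "AE r in lborel. r \<in> {0..<1} \<longrightarrow> norm (r powr x * \<omega> r) \<le> norm (\<omega> r)"
    using assms by (auto simp: abs_mult intro!: mult_left_le_one_le powr_le1)
qed

lemma moment_pos:
  assumes "radial_weight \<omega>" "0 \<le> x"
  shows "0 < moment \<omega> x"
proof -
  let ?f = "\<lambda>r. indicator {0..<1} r * (r powr x * \<omega> r)"
  have \<omega>: "\<forall>r\<in>{0..<1}. 0 \<le> \<omega> r" "0 < (LINT r:{0..<1}|lborel. \<omega> r)"
    using assms(1) unfolding radial_weight_def by auto
  have f_int: "integrable lborel ?f"
    using radial_weight_set_integrable_moment[OF assms] by (simp add: set_integrable_def)
  have f_nonneg: "AE r in lborel. 0 \<le> ?f r"
    using \<omega> by (auto split: split_indicator)
  have "moment \<omega> x \<noteq> 0"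
  proof
    assume "moment \<omega> x = 0"
    then have "AE r in lborel. ?f r = 0"
      using integral_nonneg_eq_0_iff_AE[OF f_int f_nonneg]
      by (simp add: moment_def set_lebesgue_integral_def)
    then have "AE r in lborel. indicator {0..<1} r * \<omega> r = 0"
      using AE_lborel_singleton[of 0] by eventually_elim (auto split: split_indicator)
    then have "(LINT r:{0..<1}|lborel. \<omega> r) = 0"
      unfolding set_lebesgue_integral_def by (simp add: integral_eq_zero_AE)
    with \<omega> show False by simp
  qed
  moreover have "0 \<le> moment \<omega> x"
    using f_nonneg by (simp add: moment_def set_lebesgue_integral_def integral_nonneg_AE)
  ultimately show ?thesis by simp
qed

lemma nn_integral_eq_moment:
  assumes "radial_weight \<omega>" "0 \<le> x"
  shows "(\<integral>\<^sup>+r. ennreal (r powr x * \<omega> r) * indicator {0..<1} r \<partial>lborel) = ennreal (moment \<omega> x)"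
proof -
  have "\<forall>r\<in>{0..<1}. 0 \<le> \<omega> r"
    using assms(1) unfolding radial_weight_def by auto
  then have "AE r in lborel. 0 \<le> r powr x * \<omega> r * indicator {0..<1} r"
    by (auto split: split_indicator)
  moreover have "integrable lborel (\<lambda>r. r powr x * \<omega> r * indicator {0..<1} r)"
    using radial_weight_set_integrable_moment[OF assms] by (simp add: set_integrable_def mult.commute)
  ultimately have "(\<integral>\<^sup>+r. ennreal (r powr x * \<omega> r * indicator {0..<1} r) \<partial>lborel)
      = ennreal (\<integral>r. r powr x * \<omega> r * indicator {0..<1} r \<partial>lborel)"
    by (rule nn_integral_eq_integral[rotated])
  then show ?thesis
    unfolding nn_integral_set_ennreal by (simp add: moment_def set_lebesgue_integral_def mult.commute)
qed

lemma nn_integral_disc_norm_power: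
  assumes "radial_weight \<omega>" "0 < p"
  shows "(\<integral>\<^sup>+z. indicator (ball (0::complex) 1) z * ennreal (norm (z ^ n) powr p * \<omega> (norm z)) \<partial>lborel)
       = ennreal (2 * pi * moment \<omega> (real n * p + 1))"
proof -
  define x where "x = real n * p + 1"
  have x: "0 \<le> x" unfolding x_def using assms(2) by simp
  note [measurable] = radial_weight_borel_measurable[OF assms(1)]
  \<comment> \<open>\<omega> is only known to be measurable on [0,1), so the integrands carry the indicator of [0,1).\<close>
  define g where "g r = ennreal ((r ^ n) powr p * (indicator {0..<1} r * \<omega> r))" for r
  have [measurable]: "g \<in> borel_measurable borel"
    unfolding g_def by measurable
  have "(\<lambda>r. ennreal (r powr x * \<omega> r) * indicator {0..<1} r)
      = (\<lambda>r. ennreal (r powr x * (indicator {0..<1} r * \<omega> r)))"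
    by (rule ext) (simp split: split_indicator)
  then have [measurable]: "(\<lambda>r. ennreal (r powr x * \<omega> r) * indicator {0..<1} r) \<in> borel_measurable borel"
    by simp
  have polar: "ennreal (2 * pi * r) * indicator {0..1} r * g r
      = ennreal (2 * pi) * (ennreal (r powr x * \<omega> r) * indicator {0..<1} r)" if "r \<noteq> 1" for r
  proof (cases "r \<in> {0..<1}")
    case True
    have "r * (r ^ n) powr p = r powr x"
      using True assms(2) by (cases "r = 0") (auto simp: x_def powr_add powr_powr powr_realpow[symmetric])
    moreover have "0 \<le> \<omega> r"
      using assms(1) True unfolding radial_weight_def by auto
    ultimately show ?thesis
      using True by (simp add: g_def ennreal_mult[symmetric] mult_ac)
  qed (use that in \<open>auto simp: g_def split: split_indicator\<close>)
  have "(\<integral>\<^sup>+z. indicator (ball (0::complex) 1) z * ennreal (norm (z ^ n) powr p * \<omega> (norm z)) \<partial>lborel)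
      = (\<integral>\<^sup>+z. indicator (ball (0::complex) 1) z * g (norm z) \<partial>lborel)"
    by (intro nn_integral_cong) (auto simp: g_def norm_power split: split_indicator)
  also have "\<dots> = (\<integral>\<^sup>+r. ennreal (2 * pi * r) * indicator {0..1} r * g r \<partial>lborel)"
    by (simp add: nn_integral_radial_ball_complex)
  also have "\<dots> = (\<integral>\<^sup>+r. ennreal (2 * pi) * (ennreal (r powr x * \<omega> r) * indicator {0..<1} r) \<partial>lborel)"
    using AE_lborel_singleton[of 1] by (intro nn_integral_cong_AE) (auto elim!: eventually_mono simp: polar)
  also have "\<dots> = ennreal (2 * pi * moment \<omega> x)"
    using moment_pos[OF assms(1) x]
    by (simp add: nn_integral_cmult nn_integral_eq_moment[OF assms(1) x] ennreal_mult)
  finally show ?thesis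
    unfolding x_def .
qed

lemma A_norm_power:
  assumes "radial_weight \<omega>" "0 < p"
  shows "A_norm \<omega> p (\<lambda>z. z ^ n) = ennreal ((2 * moment \<omega> (real n * p + 1)) powr (1 / p))"
proof -
  have "0 < moment \<omega> (real n * p + 1)"
    using assms by (intro moment_pos) auto
  then show ?thesis
    by (simp add: A_norm_def ennroot_def nn_integral_disc_norm_power[OF assms] divide_ennreal)
qed

lemma HL_norm_power:
  assumes "radial_weight \<omega>" "0 < p"
  shows "HL_norm \<omega> p (\<lambda>z. z ^ n)
       = ennreal (((real n + 1) powr (p - 2) * moment \<omega> (real n * p + 1)) powr (1 / p))"
proof -
  have "(\<Sum>k. ennreal (norm (taylor_coeff (\<lambda>z. z ^ n) k) powr p * (real k + 1) powr (p - 2)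
                     * moment \<omega> (real k * p + 1)))
      = (\<Sum>k\<in>{n}. ennreal (norm (taylor_coeff (\<lambda>z. z ^ n) k) powr p * (real k + 1) powr (p - 2)
                     * moment \<omega> (real k * p + 1)))"
    by (rule suminf_finite) (auto simp: taylor_coeff_power)
  moreover have "0 < moment \<omega> (real n * p + 1)"
    using assms by (intro moment_pos) auto
  ultimately show ?thesis
    by (simp add: HL_norm_def ennroot_def taylor_coeff_power)
qed

lemma powr_inverse_le_imp_le:
  fixes c d u v p :: real
  assumes "0 < p" "0 \<le> c" "0 \<le> d" "0 \<le> u" "0 \<le> v"
    and "c * u powr (1 / p) \<le> d * v powr (1 / p)"
  shows "c powr p * u \<le> d powr p * v"
proof -
  have "(c * u powr (1 / p)) powr p \<le> (d * v powr (1 / p)) powr p"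
    using assms by (intro powr_mono2) auto
  then show ?thesis
    using assms by (simp add: powr_mult powr_powr)
qed

lemma powr_not_bounded_away:
  fixes e L U :: real
  assumes "e \<noteq> 0" "0 < L"
  shows "\<not> (\<forall>n. L \<le> (real n + 1) powr e \<and> (real n + 1) powr e \<le> U)"
proof
  assume bounds: "\<forall>n. L \<le> (real n + 1) powr e \<and> (real n + 1) powr e \<le> U"
  show False
  proof (cases "e > 0")
    case True
    then have "filterlim (\<lambda>n. (real n + 1) powr e) at_top sequentially"
      by real_asymp
    then obtain n where "U < (real n + 1) powr e"
      by (auto simp: filterlim_at_top_dense eventually_sequentially)
    with bounds show False
      by (meson not_le)
  next
    case False
    with assms(1) have "e < 0" by simp
    then have "(\<lambda>n. (real n + 1) powr e) \<longlonglongrightarrow> 0"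
      by real_asymp
    from order_tendstoD(2)[OF this assms(2)] obtain n where "(real n + 1) powr e < L"
      by (auto simp: eventually_sequentially)
    with bounds show False
      by (meson not_le)
  qed
qed

lemma norm_equivalence_on_powers_imp_bounds:
  assumes "radial_weight \<omega>" "0 < p" "0 < C"
    and lower: "ennreal (1 / C) * HL_norm \<omega> p (\<lambda>z. z ^ n) \<le> A_norm \<omega> p (\<lambda>z. z ^ n)"
    and upper: "A_norm \<omega> p (\<lambda>z. z ^ n) \<le> ennreal C * HL_norm \<omega> p (\<lambda>z. z ^ n)"
  shows "2 / C powr p \<le> (real n + 1) powr (p - 2) \<and> (real n + 1) powr (p - 2) \<le> 2 * C powr p"
proof -
  define a where "a = moment \<omega> (real n * p + 1)"
  define b where "b = (real n + 1) powr (p - 2)"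
  have a: "0 < a" unfolding a_def using assms by (intro moment_pos) auto
  have b: "0 < b" unfolding b_def by simp
  have "1 / C * (b * a) powr (1 / p) \<le> 1 * (2 * a) powr (1 / p)"
    using lower assms a b
    by (simp add: A_norm_power HL_norm_power a_def b_def ennreal_mult[symmetric])
  then have "(1 / C) powr p * (b * a) \<le> 1 powr p * (2 * a)"
    using assms a b by (intro powr_inverse_le_imp_le) auto
  then have "b \<le> 2 * C powr p"
    using assms a by (simp add: powr_divide field_simps)
  moreover have "1 * (2 * a) powr (1 / p) \<le> C * (b * a) powr (1 / p)"
    using upper assms a b
    by (simp add: A_norm_power HL_norm_power a_def b_def ennreal_mult[symmetric])
  then have "1 powr p * (2 * a) \<le> C powr p * (b * a)"
    using assms a b by (intro powr_inverse_le_imp_le) auto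
  then have "2 / C powr p \<le> b"
    using assms a by (simp add: field_simps)
  ultimately show ?thesis
    unfolding b_def by simp
qed

theorem mainTheorem11:
  fixes \<omega> :: "real \<Rightarrow> real" and p :: real
  assumes "radial_weight \<omega>" and "0 < p" and "p \<noteq> 2"
  shows "\<not> (\<exists>C::real. C > 1 \<and>
            (\<forall>f. f holomorphic_on ball 0 1 \<longrightarrow>
                 ennreal (1 / C) * HL_norm \<omega> p f \<le> A_norm \<omega> p f \<and>
                 A_norm \<omega> p f \<le> ennreal C * HL_norm \<omega> p f))"
proof (rule notI, elim exE conjE, goal_cases)
  case (1 C)
  have "(\<lambda>z. z ^ n) holomorphic_on ball 0 1" for n :: nat
    by (intro holomorphic_intros)
  then have "2 / C powr p \<le> (real n + 1) powr (p - 2) \<and> (real n + 1) powr (p - 2) \<le> 2 * C powr p"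
    for n :: nat
    using 1 assms by (intro norm_equivalence_on_powers_imp_bounds) auto
  moreover have "0 < 2 / C powr p"
    using \<open>C > 1\<close> by simp
  ultimately show False
    using powr_not_bounded_away[of "p - 2" "2 / C powr p" "2 * C powr p"] assms(3) by simp
qed

end
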